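(* Let $M$ be a matroid obtained from a binary matroid $N$ by relaxing a circuit-hyperplane $X$ of $N$. Suppose $M$ has a minor isomorphic to the whirl $\mathcal{W}^k$ for some $k\ge 3$. Then, for every minor $M_1$ of $M$ isomorphic to $\mathcal{W}^k$, every rim element of $M_1$ lies in $X$ and no element of $X$ is a spoke of $M_1$.
   Context: Relaxing a circuit-hyperplane $X$ of $N$ means forming the matroid on $E(N)$ whose bases are the bases of $N$ together with $X$. For $k\ge 3$, the wheel $W_k$ is the graph consisting of a $k$-cycle (the rim) together with a new vertex (the hub) joined to every vertex of the cycle (these edges are the spokes); the rim is a circuit-hyperplane of the cycle matroid $M(W_k)$, and the whirl $\mathcal{W}^k$ is the matroid obtained from $M(W_k)$ by relaxing the rim. The rim elements and spokes of $\mathcal{W}^k$ are those of $W_k$ (for $k\ge3$ this partition is preserved by all automorphisms, so it is well-defined in any minor isomorphic to $\mathcal{W}^k$). *)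

theory Defs
  imports Main "HOL-Library.Z2"
begin

definition matroid :: "'a set \<Rightarrow> ('a set \<Rightarrow> bool) \<Rightarrow> bool" where
  "matroid E indep \<longleftrightarrow>
     finite E \<and>
     (\<forall>Y. indep Y \<longrightarrow> Y \<subseteq> E) \<and>
     indep {} \<and>
     (\<forall>Y Z. indep Z \<and> Y \<subseteq> Z \<longrightarrow> indep Y) \<and>
     (\<forall>Y Z. indep Y \<and> indep Z \<and> card Y < card Z \<longrightarrow>
        (\<exists>e \<in> Z - Y. indep (insert e Y)))"

definition bases :: "'a set \<Rightarrow> ('a set \<Rightarrow> bool) \<Rightarrow> 'a set set" where
  "bases E indep = {B. B \<subseteq> E \<and> indep B \<and> (\<forall>B'. B \<subset> B' \<and> B' \<subseteq> E \<longrightarrow> \<not> indep B')}"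

definition rank :: "('a set \<Rightarrow> bool) \<Rightarrow> 'a set \<Rightarrow> nat" where
  "rank indep Y = Max {card J | J. J \<subseteq> Y \<and> indep J}"

definition circuit :: "'a set \<Rightarrow> ('a set \<Rightarrow> bool) \<Rightarrow> 'a set \<Rightarrow> bool" where
  "circuit E indep C \<longleftrightarrow> C \<subseteq> E \<and> \<not> indep C \<and> (\<forall>D. D \<subset> C \<longrightarrow> indep D)"

definition flat :: "'a set \<Rightarrow> ('a set \<Rightarrow> bool) \<Rightarrow> 'a set \<Rightarrow> bool" where
  "flat E indep F \<longleftrightarrow> F \<subseteq> E \<and> (\<forall>e \<in> E - F. rank indep (insert e F) > rank indep F)"

definition hyperplane :: "'a set \<Rightarrow> ('a set \<Rightarrow> bool) \<Rightarrow> 'a set \<Rightarrow> bool" where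
  "hyperplane E indep H \<longleftrightarrow> flat E indep H \<and> rank indep H + 1 = rank indep E"

definition circuit_hyperplane :: "'a set \<Rightarrow> ('a set \<Rightarrow> bool) \<Rightarrow> 'a set \<Rightarrow> bool" where
  "circuit_hyperplane E indep X \<longleftrightarrow> circuit E indep X \<and> hyperplane E indep X"

definition relax :: "'a set \<Rightarrow> ('a set \<Rightarrow> bool) \<Rightarrow> 'a set \<Rightarrow> ('a set \<Rightarrow> bool)" where
  "relax E indep X = (\<lambda>Y. \<exists>B \<in> insert X (bases E indep). Y \<subseteq> B)"

text \<open>Binary: representable over GF(2) (the field bit), i.e. there are vectors v e
  (with coordinates indexed by nat) such that Y is independent iff the family
  (v e)_{e in Y} is linearly independent over GF(2), i.e. no nonempty subfamily sums to 0.\<close>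
definition binary :: "'a set \<Rightarrow> ('a set \<Rightarrow> bool) \<Rightarrow> bool" where
  "binary E indep \<longleftrightarrow> matroid E indep \<and>
     (\<exists>v :: 'a \<Rightarrow> nat \<Rightarrow> bit. \<forall>Y \<subseteq> E.
        indep Y \<longleftrightarrow> (\<forall>S \<subseteq> Y. S \<noteq> {} \<longrightarrow> (\<lambda>i. \<Sum>x\<in>S. v x i) \<noteq> (\<lambda>i. 0)))"

text \<open>Minors: M / C \ D for disjoint C, D subsets of E.  Y is independent in M / C iff
  r(Y \<union> C) = |Y| + r(C).\<close>
definition minor ::
  "'a set \<Rightarrow> ('a set \<Rightarrow> bool) \<Rightarrow> 'a set \<Rightarrow> ('a set \<Rightarrow> bool) \<Rightarrow> bool" where
  "minor E indep E1 indep1 \<longleftrightarrow>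
     (\<exists>C D. C \<subseteq> E \<and> D \<subseteq> E \<and> C \<inter> D = {} \<and> E1 = E - C - D \<and>
        (\<forall>Y. indep1 Y \<longleftrightarrow> Y \<subseteq> E1 \<and> rank indep (Y \<union> C) = card Y + rank indep C))"

definition iso_map ::
  "('a \<Rightarrow> 'b) \<Rightarrow> 'a set \<Rightarrow> ('a set \<Rightarrow> bool) \<Rightarrow> 'b set \<Rightarrow> ('b set \<Rightarrow> bool) \<Rightarrow> bool" where
  "iso_map f E1 indep1 E2 indep2 \<longleftrightarrow>
     bij_betw f E1 E2 \<and> (\<forall>Y \<subseteq> E1. indep1 Y \<longleftrightarrow> indep2 (f ` Y))"

text \<open>An edge set F is independent (a forest) iff no edge e in F lies on a cycle of F,
  i.e. the endpoints of e are not joined by a path in F - {e}.\<close>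
definition adj :: "('e \<Rightarrow> 'v \<times> 'v) \<Rightarrow> 'e set \<Rightarrow> ('v \<times> 'v) set" where
  "adj ends F = {(a, b). \<exists>e \<in> F. ends e = (a, b) \<or> ends e = (b, a)}"

definition cycle_indep :: "'e set \<Rightarrow> ('e \<Rightarrow> 'v \<times> 'v) \<Rightarrow> 'e set \<Rightarrow> bool" where
  "cycle_indep Ed ends F \<longleftrightarrow> F \<subseteq> Ed \<and> (\<forall>e \<in> F. ends e \<notin> (adj ends (F - {e}))\<^sup>*)"

text \<open>Wheel W_k: hub vertex None, rim vertices Some i (i < k).
  Edge (False, i) is the rim edge joining Some i and Some ((i+1) mod k);
  edge (True, i) is the spoke joining the hub and Some i.\<close>
definition wheel_rim :: "nat \<Rightarrow> (bool \<times> nat) set" where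
  "wheel_rim k = {(False, i) | i. i < k}"

definition wheel_spokes :: "nat \<Rightarrow> (bool \<times> nat) set" where
  "wheel_spokes k = {(True, i) | i. i < k}"

definition wheel_edges :: "nat \<Rightarrow> (bool \<times> nat) set" where
  "wheel_edges k = wheel_rim k \<union> wheel_spokes k"

definition wheel_ends :: "nat \<Rightarrow> bool \<times> nat \<Rightarrow> nat option \<times> nat option" where
  "wheel_ends k e = (if fst e then (None, Some (snd e))
                     else (Some (snd e), Some ((snd e + 1) mod k)))"

definition wheel_indep :: "nat \<Rightarrow> (bool \<times> nat) set \<Rightarrow> bool" where
  "wheel_indep k = cycle_indep (wheel_edges k) (wheel_ends k)"

definition whirl_indep :: "nat \<Rightarrow> (bool \<times> nat) set \<Rightarrow> bool" where
  "whirl_indep k = relax (wheel_edges k) (wheel_indep k) (wheel_rim k)"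

end

theory Submission
  imports Defs "HOL-Library.Function_Algebras"
begin

(* Let R be the rim of M1.  Since R is independent in M1 and all ranks of M
   are at most |X| = r(M), the contracted set C has small rank; in particular C <> X.
   Relaxing X changes no rank except that of X, so if R u C <> X, then, with B a maximal
   N-independent subset of C, independence of a set Y of M1 with Y u C <> X is the same as
   N-independence of Y u B.  Every triangle T = {spoke i, rim i, spoke i+1} of the whirl is
   dependent while T minus any element is independent, so in a GF(2) representation of N
   each triangle sum lies in the span of B.  Summing over all triangles, each spoke occurs
   twice, so the rim sum lies in the span of B, contradicting independence of R u B in N.
   Hence R u C = X, which gives R <= X; the spokes lie in E - C and are disjoint from R. *)

section \<open>Rank and maximal independent subsets\<close>

text \<open>The rank facts below only need that the independent sets lie in a finite ground set
  and that the empty set is independent.\<close>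
definition indep_system :: "'a set \<Rightarrow> ('a set \<Rightarrow> bool) \<Rightarrow> bool" where
  "indep_system E indep \<longleftrightarrow> finite E \<and> (\<forall>J. indep J \<longrightarrow> J \<subseteq> E) \<and> indep {}"

lemma matroid_finite: "matroid E indep \<Longrightarrow> finite E"
  unfolding matroid_def by blast

lemma matroid_down: "matroid E indep \<Longrightarrow> indep J \<Longrightarrow> K \<subseteq> J \<Longrightarrow> indep K"
  unfolding matroid_def by blast

lemma matroid_augment:
  "matroid E indep \<Longrightarrow> indep Y \<Longrightarrow> indep Z \<Longrightarrow> card Y < card Z \<Longrightarrow>
     \<exists>e \<in> Z - Y. indep (insert e Y)"
  unfolding matroid_def by blast

lemma matroid_indep_system: "matroid E indep \<Longrightarrow> indep_system E indep"
  unfolding matroid_def indep_system_def by auto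

lemma indep_system_subset: "indep_system E indep \<Longrightarrow> indep J \<Longrightarrow> J \<subseteq> E"
  unfolding indep_system_def by blast

lemma rank_candidates:
  assumes "indep_system E indep"
  shows "finite {card J | J. J \<subseteq> Y \<and> indep J}" "{card J | J. J \<subseteq> Y \<and> indep J} \<noteq> {}"
proof -
  have "{card J | J. J \<subseteq> Y \<and> indep J} \<subseteq> {..card E}"
    using assms unfolding indep_system_def by (auto intro!: card_mono)
  then show "finite {card J | J. J \<subseteq> Y \<and> indep J}" using finite_subset by blast
  show "{card J | J. J \<subseteq> Y \<and> indep J} \<noteq> {}" using assms unfolding indep_system_def by auto
qed

lemma rank_ge:
  assumes "indep_system E indep" "J \<subseteq> Y" "indep J"
  shows "card J \<le> rank indep Y"
  unfolding rank_def by (rule Max_ge[OF rank_candidates(1)[OF assms(1)]]) (use assms in auto)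

lemma rank_attained:
  assumes "indep_system E indep"
  obtains J where "J \<subseteq> Y" "indep J" "card J = rank indep Y"
proof -
  have "rank indep Y \<in> {card J | J. J \<subseteq> Y \<and> indep J}"
    unfolding rank_def using rank_candidates[OF assms] by (intro Max_in) auto
  then show ?thesis using that by auto
qed

lemma rank_mono:
  assumes "indep_system E indep" "Y \<subseteq> Z"
  shows "rank indep Y \<le> rank indep Z"
proof -
  obtain J where "J \<subseteq> Y" "indep J" "card J = rank indep Y" using rank_attained[OF assms(1)] .
  then show ?thesis using rank_ge[OF assms(1), of J Z] assms(2) by auto
qed

lemma rank_le_ground:
  assumes "indep_system E indep"
  shows "rank indep Y \<le> rank indep E"
proof -
  obtain J where "J \<subseteq> Y" "indep J" "card J = rank indep Y" using rank_attained[OF assms] .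
  moreover have "J \<subseteq> E" using indep_system_subset[OF assms \<open>indep J\<close>] .
  ultimately show ?thesis using rank_ge[OF assms] by metis
qed

lemma rank_union_le:
  assumes "indep_system E indep" "\<And>J K. indep J \<Longrightarrow> K \<subseteq> J \<Longrightarrow> indep K" "finite Y"
  shows "rank indep (Y \<union> C) \<le> card Y + rank indep C"
proof -
  obtain J where J: "J \<subseteq> Y \<union> C" "indep J" "card J = rank indep (Y \<union> C)"
    using rank_attained[OF assms(1)] .
  have "J \<subseteq> (J \<inter> Y) \<union> (J \<inter> C)" using J by auto
  moreover have "finite J" using J assms(1) unfolding indep_system_def by (meson finite_subset)
  ultimately have "card J \<le> card (J \<inter> Y) + card (J \<inter> C)"
    by (metis card_Un_le card_mono finite_Un finite_Int order_trans)
  moreover have "card (J \<inter> Y) \<le> card Y" using assms(3) by (simp add: card_mono)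
  moreover have "card (J \<inter> C) \<le> rank indep C"
    using rank_ge[OF assms(1), of "J \<inter> C" C] assms(2)[OF J(2)] by auto
  ultimately show ?thesis using J by linarith
qed

definition max_indep_subset :: "('a set \<Rightarrow> bool) \<Rightarrow> 'a set \<Rightarrow> 'a set \<Rightarrow> bool" where
  "max_indep_subset indep Z K \<longleftrightarrow>
     K \<subseteq> Z \<and> indep K \<and> (\<forall>K'. K \<subset> K' \<and> K' \<subseteq> Z \<longrightarrow> \<not> indep K')"

text \<open>Every independent subset P of a finite set Z extends to a maximal one
  (take an independent superset of P in Z of maximum size).\<close>
lemma exists_max_indep_subset:
  assumes "finite Z" "indep P" "P \<subseteq> Z"
  obtains K where "P \<subseteq> K" "max_indep_subset indep Z K"
proof -
  let ?S = "{K. P \<subseteq> K \<and> K \<subseteq> Z \<and> indep K}"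
  have "?S \<subseteq> Pow Z" by auto
  then have "finite ?S" using assms(1) finite_subset by blast
  then have fin: "finite (card ` ?S)" by blast
  have "P \<in> ?S" using assms by blast
  then have "Max (card ` ?S) \<in> card ` ?S" using fin by (intro Max_in) auto
  then obtain K where K: "K \<in> ?S" "card K = Max (card ` ?S)" by auto
  have "\<not> indep K'" if K': "K \<subset> K'" "K' \<subseteq> Z" for K'
  proof
    assume "indep K'"
    then have "card K' \<le> card K" using K K' fin by auto
    moreover have "card K < card K'" using K' assms(1) by (meson finite_subset psubset_card_mono)
    ultimately show False by simp
  qed
  then have "max_indep_subset indep Z K" using K(1) unfolding max_indep_subset_def by blast
  then show ?thesis using K(1) that by blast
qed

lemma extend_to_basis:
  assumes "finite E" "indep J" "J \<subseteq> E"
  shows "\<exists>B \<in> bases E indep. J \<subseteq> B"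
proof -
  obtain K where "J \<subseteq> K" "max_indep_subset indep E K" using exists_max_indep_subset assms .
  then show ?thesis unfolding max_indep_subset_def bases_def by blast
qed

text \<open>In a matroid, by the augmentation axiom, all maximal independent subsets of Z have
  size equal to the rank of Z.\<close>
lemma max_indep_subset_card:
  assumes mat: "matroid E indep" and K: "max_indep_subset indep Z K"
  shows "card K = rank indep Z"
proof -
  have sys: "indep_system E indep" using matroid_indep_system[OF mat] .
  obtain J where J: "J \<subseteq> Z" "indep J" "card J = rank indep Z" using rank_attained[OF sys] .
  have "card J \<le> card K"
  proof (rule ccontr)
    assume "\<not> card J \<le> card K"
    moreover have "indep K" using K unfolding max_indep_subset_def by blast
    ultimately obtain e where "e \<in> J - K" "indep (insert e K)"
      using matroid_augment[OF mat _ J(2)] by (meson not_le)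
    then show False using K J(1) unfolding max_indep_subset_def by blast
  qed
  moreover have "card K \<le> rank indep Z" using rank_ge[OF sys] K unfolding max_indep_subset_def by blast
  ultimately show ?thesis using J(3) by linarith
qed

lemma contract_indep_iff:
  assumes mat: "matroid E N" and B: "max_indep_subset N C B" and CE: "C \<subseteq> E"
    and YE: "Y \<subseteq> E" and disj: "Y \<inter> C = {}"
  shows "rank N (Y \<union> C) = card Y + rank N C \<longleftrightarrow> N (Y \<union> B)"
proof -
  have sys: "indep_system E N" using matroid_indep_system[OF mat] .
  have finY: "finite Y" using finite_subset[OF YE matroid_finite[OF mat]] .
  have BC: "B \<subseteq> C" "N B" using B unfolding max_indep_subset_def by auto
  have finB: "finite B" using finite_subset[OF _ matroid_finite[OF mat]] BC(1) CE by blast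
  have "card (Y \<union> B) = card Y + card B"
    using card_Un_disjoint[OF finY finB] disj BC(1) by blast
  then have card_YB: "card (Y \<union> B) = card Y + rank N C"
    using max_indep_subset_card[OF mat B] by simp
  show ?thesis
  proof
    assume r: "rank N (Y \<union> C) = card Y + rank N C"
    have "finite (Y \<union> C)" using finY finite_subset[OF CE matroid_finite[OF mat]] by simp
    then obtain K where K: "B \<subseteq> K" "max_indep_subset N (Y \<union> C) K"
      using exists_max_indep_subset[of "Y \<union> C" N B] BC by blast
    have KN: "N K" "K \<subseteq> Y \<union> C" using K(2) unfolding max_indep_subset_def by auto
    text \<open>K meets C exactly in B, by maximality of B in C.\<close>
    have "N (K \<inter> C)" using matroid_down[OF mat KN(1)] by blast
    moreover have "B \<subseteq> K \<inter> C" using K(1) BC by blast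
    moreover have "\<not> N K'" if "B \<subset> K'" "K' \<subseteq> C" for K'
      using B that unfolding max_indep_subset_def by blast
    ultimately have "K \<inter> C = B" by blast
    then have "K \<subseteq> Y \<union> B" using KN by blast
    moreover have "card K = card (Y \<union> B)" using max_indep_subset_card[OF mat K(2)] r card_YB by simp
    ultimately have "K = Y \<union> B" using card_subset_eq[of "Y \<union> B" K] finY finB by simp
    then show "N (Y \<union> B)" using KN by simp
  next
    assume "N (Y \<union> B)"
    then have "card (Y \<union> B) \<le> rank N (Y \<union> C)" using rank_ge[OF sys, of "Y \<union> B"] BC(1) by blast
    moreover have "rank N (Y \<union> C) \<le> card Y + rank N C"
      using rank_union_le[OF sys matroid_down[OF mat] finY] .
    ultimately show "rank N (Y \<union> C) = card Y + rank N C" using card_YB by linarith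
  qed
qed

section \<open>Ranks in a relaxation\<close>

locale relaxation =
  fixes E :: "'a set" and N :: "'a set \<Rightarrow> bool" and X :: "'a set"
  assumes mat: "matroid E N" and circ_hyp: "circuit_hyperplane E N X"
begin

abbreviation M :: "'a set \<Rightarrow> bool" where "M \<equiv> relax E N X"

lemma X_subset: "X \<subseteq> E" and X_dep: "\<not> N X" and X_minimal: "\<And>D. D \<subset> X \<Longrightarrow> N D"
  and X_flat: "\<And>e. e \<in> E - X \<Longrightarrow> rank N (insert e X) > rank N X"
  and X_corank: "rank N X + 1 = rank N E"
  using circ_hyp unfolding circuit_hyperplane_def circuit_def hyperplane_def flat_def by auto

lemma finite_X: "finite X"
  using finite_subset[OF X_subset matroid_finite[OF mat]] .

lemma sys_N: "indep_system E N"
  using matroid_indep_system[OF mat] .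

lemma M_subset: "M J \<Longrightarrow> J \<subseteq> E"
  using X_subset unfolding relax_def bases_def by auto

lemma sys_M: "indep_system E M"
  unfolding indep_system_def using matroid_finite[OF mat] M_subset unfolding relax_def by auto

lemma M_X: "M X"
  unfolding relax_def by blast

lemma M_down: "M J \<Longrightarrow> K \<subseteq> J \<Longrightarrow> M K"
  unfolding relax_def by blast

lemma N_imp_M: "N J \<Longrightarrow> M J"
proof -
  assume "N J"
  then obtain B where "B \<in> bases E N" "J \<subseteq> B"
    using extend_to_basis[OF matroid_finite[OF mat]] indep_system_subset[OF sys_N] by blast
  then show "M J" unfolding relax_def by blast
qed

lemma M_imp_N: "M J \<Longrightarrow> N J \<or> J = X"
proof -
  assume "M J"
  then obtain B where B: "B \<in> insert X (bases E N)" "J \<subseteq> B" unfolding relax_def by blast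
  show "N J \<or> J = X"
  proof (cases "B = X")
    case True
    then show ?thesis using B X_minimal by blast
  next
    case False
    then have "N B" using B unfolding bases_def by auto
    then show ?thesis using matroid_down[OF mat] B by blast
  qed
qed

text \<open>As a circuit, X has N-rank |X| - 1; as a hyperplane, N then has rank |X|.\<close>
lemma rank_N_X: "rank N X + 1 = card X"
proof -
  have "X \<noteq> {}" using X_dep sys_N unfolding indep_system_def by blast
  then obtain x where "x \<in> X" by blast
  then have "N (X - {x})" using X_minimal by blast
  then have "card (X - {x}) \<le> rank N X" using rank_ge[OF sys_N, of "X - {x}"] by blast
  then have "card X \<le> rank N X + 1" using \<open>x \<in> X\<close> finite_X by simp
  moreover obtain J where J: "J \<subseteq> X" "N J" "card J = rank N X" using rank_attained[OF sys_N] .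
  then have "J \<subset> X" using X_dep by blast
  then have "rank N X < card X" using J finite_X psubset_card_mono by metis
  ultimately show ?thesis by linarith
qed

lemma rank_N_E: "rank N E = card X"
  using rank_N_X X_corank by simp

lemma rank_M_le: "rank M Y \<le> card X"
proof -
  obtain J where J: "J \<subseteq> Y" "M J" "card J = rank M Y" using rank_attained[OF sys_M] .
  from M_imp_N[OF J(2)] show ?thesis
  proof
    assume "N J"
    then have "card J \<le> rank N Y" using rank_ge[OF sys_N J(1)] by blast
    also have "\<dots> \<le> rank N E" by (rule rank_le_ground[OF sys_N])
    finally show ?thesis using rank_N_E J by linarith
  qed (use J in simp)
qed

lemma rank_M_X: "rank M X = card X"
  using rank_ge[OF sys_M _ M_X, of X] rank_M_le[of X] by simp

lemma rank_N_le_M: "rank N Y \<le> rank M Y"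
proof -
  obtain J where J: "J \<subseteq> Y" "N J" "card J = rank N Y" using rank_attained[OF sys_N] .
  then show ?thesis using rank_ge[OF sys_M, of J Y] N_imp_M by metis
qed

text \<open>Relaxing X changes no rank except that of X itself: a set Y \<noteq> X containing an
  M-independent copy of X also contains a further element e, and X + e has N-rank |X|.\<close>
lemma rank_M_eq_N:
  assumes "Y \<subseteq> E" "Y \<noteq> X"
  shows "rank M Y = rank N Y"
proof -
  obtain J where J: "J \<subseteq> Y" "M J" "card J = rank M Y" using rank_attained[OF sys_M] .
  have "rank M Y \<le> rank N Y"
  proof (cases "N J")
    case True
    then show ?thesis using J rank_ge[OF sys_N] by metis
  next
    case False
    then have "J = X" using M_imp_N J by blast
    then obtain e where e: "e \<in> Y - X" using J assms by blast
    then have "card X \<le> rank N (insert e X)" using X_flat rank_N_X assms(1) by fastforce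
    also have "\<dots> \<le> rank N Y" using rank_mono[OF sys_N] e J \<open>J = X\<close> by blast
    finally show ?thesis using J(3) \<open>J = X\<close> by simp
  qed
  then show ?thesis using rank_N_le_M[of Y] by linarith
qed

lemma contract_N_imp_M:
  assumes "C \<subseteq> E" "C \<noteq> X" "max_indep_subset N C B" "Y \<subseteq> E" "Y \<inter> C = {}" "N (Y \<union> B)"
  shows "rank M (Y \<union> C) = card Y + rank M C"
proof -
  have "rank N (Y \<union> C) = card Y + rank N C" using contract_indep_iff[OF mat assms(3,1,4,5)] assms(6) by blast
  moreover have "finite Y" using finite_subset[OF assms(4) matroid_finite[OF mat]] .
  then have "rank M (Y \<union> C) \<le> card Y + rank M C"
    by (rule rank_union_le[OF sys_M _, rotated]) (rule M_down)
  moreover have "rank M C = rank N C" using rank_M_eq_N assms(1,2) by blast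
  ultimately show ?thesis using rank_N_le_M[of "Y \<union> C"] by linarith
qed

lemma contract_M_imp_N:
  assumes "C \<subseteq> E" "C \<noteq> X" "max_indep_subset N C B" "Y \<subseteq> E" "Y \<inter> C = {}" "Y \<union> C \<noteq> X"
    and "rank M (Y \<union> C) = card Y + rank M C"
  shows "N (Y \<union> B)"
proof -
  have "Y \<union> C \<subseteq> E" using assms(1,4) by blast
  then have "rank M (Y \<union> C) = rank N (Y \<union> C)" using rank_M_eq_N assms(6) by blast
  moreover have "rank M C = rank N C" using rank_M_eq_N assms(1,2) by blast
  ultimately have "rank N (Y \<union> C) = card Y + rank N C" using assms(7) by linarith
  then show ?thesis using contract_indep_iff[OF mat assms(3,1,4,5)] by blast
qed

end

section \<open>Sums of vectors over GF(2)\<close>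

text \<open>Vectors over GF(2) are functions into bit; with pointwise addition, the sum of a
  family of vectors is taken coordinatewise.\<close>
lemma sum_fun_apply: "sum f A x = (\<Sum>a\<in>A. f a x)"
  for f :: "'a \<Rightarrow> 'b \<Rightarrow> 'c::comm_monoid_add"
  by (induction A rule: infinite_finite_induct) auto

lemma bitvec_add_self [simp]: "(x :: 'i \<Rightarrow> bit) + x = 0"
  by (rule ext) simp

lemma bitvec_add_eq_0_iff: "(x :: 'i \<Rightarrow> bit) + y = 0 \<longleftrightarrow> x = y"
proof -
  have "(a::bit) + b = 0 \<longleftrightarrow> a = b" for a b by (cases a; cases b) simp_all
  then show ?thesis by (simp add: fun_eq_iff)
qed

lemma zero_sum_split:
  fixes v :: "'a \<Rightarrow> 'i \<Rightarrow> bit"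
  assumes "finite S" "T \<subseteq> S" "sum v S = 0"
  shows "sum v T = sum v (S - T)"
proof -
  have "sum v (S - T) + sum v T = sum v S" by (rule sum.subset_diff[OF assms(2,1), symmetric])
  also have "\<dots> = 0" by (rule assms(3))
  finally have "sum v (S - T) = sum v T" by (simp only: bitvec_add_eq_0_iff)
  then show ?thesis ..
qed

definition gf2_represents :: "'a set \<Rightarrow> ('a set \<Rightarrow> bool) \<Rightarrow> ('a \<Rightarrow> nat \<Rightarrow> bit) \<Rightarrow> bool" where
  "gf2_represents E indep v \<longleftrightarrow> (\<forall>Y \<subseteq> E. indep Y \<longleftrightarrow> (\<forall>S \<subseteq> Y. S \<noteq> {} \<longrightarrow> sum v S \<noteq> 0))"

lemma binary_represented:
  assumes "binary E indep"
  obtains v where "gf2_represents E indep v"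
proof -
  have "(\<lambda>i. \<Sum>x\<in>S. v x i) = sum v S" and "(\<lambda>i. 0) = (0 :: nat \<Rightarrow> bit)"
    for v :: "'a \<Rightarrow> nat \<Rightarrow> bit" and S
    by (simp_all add: fun_eq_iff sum_fun_apply)
  then show ?thesis using assms that unfolding binary_def gf2_represents_def by auto
qed

lemma represented_indep_sum:
  "gf2_represents E indep v \<Longrightarrow> Y \<subseteq> E \<Longrightarrow> indep Y \<Longrightarrow> S \<subseteq> Y \<Longrightarrow> S \<noteq> {} \<Longrightarrow> sum v S \<noteq> 0"
  unfolding gf2_represents_def by blast

lemma represented_dep_sum:
  assumes "gf2_represents E indep v" "Y \<subseteq> E" "\<not> indep Y"
  obtains S where "S \<subseteq> Y" "S \<noteq> {}" "sum v S = 0"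
  using assms unfolding gf2_represents_def by blast

lemma sum_symdiff:
  fixes f :: "'a \<Rightarrow> 'i \<Rightarrow> bit"
  assumes "finite A" "finite B"
  shows "sum f A + sum f B = sum f ((A - B) \<union> (B - A))"
proof -
  have "sum f A + sum f B = sum f (A - B) + sum f (B - A) + (sum f (A \<inter> B) + sum f (A \<inter> B))"
    using assms by (simp add: sum.Int_Diff[of A f B] sum.Int_Diff[of B f A] Int_commute ac_simps)
  also have "\<dots> = sum f ((A - B) \<union> (B - A))"
    using assms by (simp add: sum.union_disjoint Diff_Int_distrib2)
  finally show ?thesis .
qed

lemma sum_of_subset_sums:
  fixes v :: "'a \<Rightarrow> 'i \<Rightarrow> bit" and w :: "'j \<Rightarrow> 'i \<Rightarrow> bit"
  assumes "finite I" "finite B" "\<And>i. i \<in> I \<Longrightarrow> \<exists>A \<subseteq> B. w i = sum v A"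
  shows "\<exists>A \<subseteq> B. sum w I = sum v A"
  using assms(1,3)
proof (induction I rule: finite_induct)
  case empty
  show ?case by (intro exI[of _ "{}"]) simp
next
  case (insert i I)
  obtain A1 where A1: "A1 \<subseteq> B" "w i = sum v A1" using insert.prems by blast
  obtain A2 where A2: "A2 \<subseteq> B" "sum w I = sum v A2" using insert by blast
  have "finite A1" "finite A2" using A1(1) A2(1) assms(2) finite_subset by auto
  then have "sum w (insert i I) = sum v ((A1 - A2) \<union> (A2 - A1))"
    using insert.hyps A1(2) A2(2) sum_symdiff by simp
  moreover have "(A1 - A2) \<union> (A2 - A1) \<subseteq> B" using A1(1) A2(1) by blast
  ultimately show ?case by blast
qed

text \<open>If T \<union> B is dependent but becomes independent on deleting any element of T, then
  a zero-sum subset of T \<union> B must contain all of T, so the sum over T lies in the span of B.\<close>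
lemma represented_critical_sum:
  assumes rep: "gf2_represents E indep v" and fin: "finite E" and TB: "T \<union> B \<subseteq> E"
    and dep: "\<not> indep (T \<union> B)" and crit: "\<And>t. t \<in> T \<Longrightarrow> indep ((T - {t}) \<union> B)"
  shows "\<exists>A \<subseteq> B. sum v T = sum v A"
proof -
  obtain S where S: "S \<subseteq> T \<union> B" "S \<noteq> {}" "sum v S = 0"
    using represented_dep_sum[OF rep TB dep] .
  have "T \<subseteq> S"
  proof
    fix t assume t: "t \<in> T"
    show "t \<in> S"
    proof (rule ccontr)
      assume "t \<notin> S"
      then have "S \<subseteq> (T - {t}) \<union> B" using S(1) by blast
      moreover have "(T - {t}) \<union> B \<subseteq> E" using TB by blast
      ultimately show False using represented_indep_sum[OF rep _ crit[OF t]] S(2,3) by blast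
    qed
  qed
  have "finite S" using finite_subset[OF S(1) finite_subset[OF TB fin]] .
  then have "sum v T = sum v (S - T)" using zero_sum_split \<open>T \<subseteq> S\<close> S(3) by blast
  moreover have "S - T \<subseteq> B" using S(1) by blast
  ultimately show ?thesis by blast
qed

section \<open>Wheels, whirls and their triangles\<close>

definition wheel_triangle :: "nat \<Rightarrow> nat \<Rightarrow> (bool \<times> nat) set" where
  "wheel_triangle k i = {(True, i), (False, i), (True, (i + 1) mod k)}"

lemma finite_wheel_edges: "finite (wheel_edges k)"
proof -
  have "wheel_edges k \<subseteq> UNIV \<times> {..<k}"
    unfolding wheel_edges_def wheel_rim_def wheel_spokes_def by auto
  then show ?thesis by (rule finite_subset) simp
qed

lemma wheel_rim_subset: "wheel_rim k \<subseteq> wheel_edges k"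
  and wheel_spokes_subset: "wheel_spokes k \<subseteq> wheel_edges k"
  unfolding wheel_edges_def by auto

lemma wheel_triangle_subset: "i < k \<Longrightarrow> wheel_triangle k i \<subseteq> wheel_edges k"
  unfolding wheel_triangle_def wheel_edges_def wheel_rim_def wheel_spokes_def by auto

lemma wheel_rim_image: "wheel_rim k = (\<lambda>i. (False, i)) ` {..<k}"
  unfolding wheel_rim_def by auto

lemma card_wheel_rim: "card (wheel_rim k) = k"
  unfolding wheel_rim_image by (subst card_image) (auto simp: inj_on_def)

lemma succ_mod_neq: "2 \<le> k \<Longrightarrow> i < k \<Longrightarrow> (i + 1) mod k \<noteq> (i :: nat)"
proof (cases "i + 1 < k")
  case False
  assume "2 \<le> k" "i < k"
  then have "i + 1 = k" "i \<noteq> 0" using False by auto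
  then show ?thesis by simp
qed simp

lemma whirl_indep_rim: "whirl_indep k (wheel_rim k)"
  unfolding whirl_indep_def relax_def by blast

lemma whirl_indep_if_wheel_indep: "wheel_indep k J \<Longrightarrow> whirl_indep k J"
proof -
  assume J: "wheel_indep k J"
  then have "J \<subseteq> wheel_edges k" unfolding wheel_indep_def cycle_indep_def by blast
  then obtain B where "B \<in> bases (wheel_edges k) (wheel_indep k)" "J \<subseteq> B"
    using extend_to_basis[of "wheel_edges k" "wheel_indep k" J] finite_wheel_edges J by blast
  then show ?thesis unfolding whirl_indep_def relax_def by blast
qed

lemma rtrancl_pair:
  assumes "(p, q) \<in> {(x, y), (y, x)}\<^sup>*"
  shows "p = q \<or> (p, q) = (x, y) \<or> (p, q) = (y, x)"
  using assms by (induction q rule: rtrancl_induct) auto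

lemma adj_single: "adj ends {b} = {(fst (ends b), snd (ends b)), (snd (ends b), fst (ends b))}"
  unfolding adj_def by (cases "ends b") auto

lemma two_edge_forest:
  assumes "a \<in> Ed" "b \<in> Ed" "a \<noteq> b"
    and "fst (ends a) \<noteq> snd (ends a)" "fst (ends b) \<noteq> snd (ends b)"
    and "ends a \<noteq> ends b" "ends a \<noteq> prod.swap (ends b)"
  shows "cycle_indep Ed ends {a, b}"
  unfolding cycle_indep_def
proof (intro conjI ballI)
  show "{a, b} \<subseteq> Ed" using assms by auto
  fix e assume e: "e \<in> {a, b}"
  define f where "f = (if e = a then b else a)"
  have rest: "{a, b} - {e} = {f}" and ef: "{e, f} = {a, b}" using e assms(3) unfolding f_def by auto
  show "ends e \<notin> (adj ends ({a, b} - {e}))\<^sup>*"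
  proof
    assume "ends e \<in> (adj ends ({a, b} - {e}))\<^sup>*"
    then have "(fst (ends e), snd (ends e)) \<in> {(fst (ends f), snd (ends f)), (snd (ends f), fst (ends f))}\<^sup>*"
      unfolding rest adj_single by simp
    from rtrancl_pair[OF this] show False
      using assms(4-7) ef by (cases "ends a"; cases "ends b") (auto simp: doubleton_eq_iff)
  qed
qed

text \<open>Each triangle is dependent in the whirl: it is not the rim, and in W_k its two spokes
  join the ends of its rim edge.\<close>
lemma whirl_triangle_dep: "\<not> whirl_indep k (wheel_triangle k i)"
proof
  let ?j = "(i + 1) mod k"
  assume "whirl_indep k (wheel_triangle k i)"
  then obtain B where B: "B \<in> insert (wheel_rim k) (bases (wheel_edges k) (wheel_indep k))"
    "wheel_triangle k i \<subseteq> B"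
    unfolding whirl_indep_def relax_def by blast
  have "(True, i) \<notin> wheel_rim k" unfolding wheel_rim_def by auto
  then have "wheel_indep k B" using B unfolding wheel_triangle_def bases_def by auto
  then have forest: "wheel_ends k (False, i) \<notin> (adj (wheel_ends k) (B - {(False, i)}))\<^sup>*"
    using B(2) unfolding wheel_indep_def cycle_indep_def wheel_triangle_def by blast
  have "(Some i, None) \<in> adj (wheel_ends k) (B - {(False, i)})"
    and "(None, Some ?j) \<in> adj (wheel_ends k) (B - {(False, i)})"
    unfolding adj_def using B(2) by (force simp: wheel_triangle_def wheel_ends_def)+
  then have "(Some i, Some ?j) \<in> (adj (wheel_ends k) (B - {(False, i)}))\<^sup>*" by auto
  then show False using forest by (simp add: wheel_ends_def)
qed

text \<open>Deleting any element of a triangle leaves a two-edge forest of W_k.\<close>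
lemma whirl_triangle_minus_indep:
  assumes k: "3 \<le> k" and i: "i < k" and t: "t \<in> wheel_triangle k i"
  shows "whirl_indep k (wheel_triangle k i - {t})"
proof -
  let ?j = "(i + 1) mod k"
  have ji: "?j \<noteq> i" using succ_mod_neq k i by simp
  have sub: "wheel_triangle k i \<subseteq> wheel_edges k" using wheel_triangle_subset[OF i] .
  have pair: "whirl_indep k {a, b}"
    if "a \<in> wheel_triangle k i" "b \<in> wheel_triangle k i" "a \<noteq> b" for a b
    using that sub ji
    by (intro whirl_indep_if_wheel_indep, unfold wheel_indep_def, intro two_edge_forest)
       (auto simp: wheel_triangle_def wheel_ends_def)
  from t consider "t = (True, i)" | "t = (False, i)" | "t = (True, ?j)"
    unfolding wheel_triangle_def by blast
  then show ?thesis
  proof cases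
    case 1
    then have "wheel_triangle k i - {t} = {(False, i), (True, ?j)}"
      using ji unfolding wheel_triangle_def by auto
    then show ?thesis using pair by (simp add: wheel_triangle_def)
  next
    case 2
    then have "wheel_triangle k i - {t} = {(True, i), (True, ?j)}"
      using ji unfolding wheel_triangle_def by auto
    then show ?thesis using pair ji by (simp add: wheel_triangle_def)
  next
    case 3
    then have "wheel_triangle k i - {t} = {(True, i), (False, i)}"
      using ji unfolding wheel_triangle_def by auto
    then show ?thesis using pair by (simp add: wheel_triangle_def)
  qed
qed

lemma sum_rotate:
  fixes a :: "nat \<Rightarrow> 'b::comm_monoid_add"
  assumes "0 < k"
  shows "(\<Sum>i<k. a ((i + 1) mod k)) = (\<Sum>i<k. a i)"
proof -
  obtain m where m: "k = Suc m" using assms by (cases k) auto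
  have "(\<Sum>i<Suc m. a ((i + 1) mod Suc m)) = (\<Sum>i<m. a ((i + 1) mod Suc m)) + a 0"
    by simp
  also have "(\<Sum>i<m. a ((i + 1) mod Suc m)) = (\<Sum>i<m. a (Suc i))"
    by (intro sum.cong) auto
  also have "(\<Sum>i<m. a (Suc i)) + a 0 = (\<Sum>i<Suc m. a i)"
    unfolding sum.lessThan_Suc_shift by (rule add.commute)
  finally show ?thesis using m by simp
qed

text \<open>Over GF(2), summing the vectors of all triangles counts every spoke twice and every
  rim edge once, so it gives the sum over the rim.\<close>
lemma rim_sum_eq_triangle_sums:
  fixes g :: "bool \<times> nat \<Rightarrow> 'i \<Rightarrow> bit"
  assumes k: "2 \<le> k"
  shows "sum g (wheel_rim k) = (\<Sum>i<k. sum g (wheel_triangle k i))"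
proof -
  have tri: "sum g (wheel_triangle k i) = g (False, i) + (g (True, i) + g (True, (i + 1) mod k))"
    if "i < k" for i
    using succ_mod_neq[OF k that] by (simp add: wheel_triangle_def ac_simps)
  have "(\<Sum>i<k. sum g (wheel_triangle k i))
      = (\<Sum>i<k. g (False, i)) + ((\<Sum>i<k. g (True, i)) + (\<Sum>i<k. g (True, (i + 1) mod k)))"
    using tri by (simp add: sum.distrib)
  also have "(\<Sum>i<k. g (True, (i + 1) mod k)) = (\<Sum>i<k. g (True, i))"
    using sum_rotate[of k "\<lambda>i. g (True, i)"] k by simp
  also have "(\<Sum>i<k. g (False, i)) = sum g (wheel_rim k)"
    unfolding wheel_rim_image by (subst sum.reindex) (auto simp: inj_on_def)
  also have "(\<Sum>i<k. g (True, i)) + (\<Sum>i<k. g (True, i)) = 0" by (rule bitvec_add_self)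
  finally have "(\<Sum>i<k. sum g (wheel_triangle k i)) = sum g (wheel_rim k)" by (simp only: add_0_right)
  then show ?thesis ..
qed

lemma triangle_sum_in_span:
  assumes rep: "gf2_represents E indep v" and fin: "finite E"
    and inj: "inj_on \<phi> (wheel_edges k)" and img: "\<phi> ` wheel_edges k \<subseteq> E - B" and BE: "B \<subseteq> E"
    and i: "i < k"
    and tri_dep: "\<not> indep (\<phi> ` wheel_triangle k i \<union> B)"
    and tri_crit: "\<And>t. t \<in> wheel_triangle k i \<Longrightarrow> indep (\<phi> ` (wheel_triangle k i - {t}) \<union> B)"
  shows "\<exists>A \<subseteq> B. sum v (\<phi> ` wheel_triangle k i) = sum v A"
proof (rule represented_critical_sum[OF rep fin])
  have T: "wheel_triangle k i \<subseteq> wheel_edges k" using wheel_triangle_subset[OF i] .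
  have "\<phi> ` wheel_triangle k i \<subseteq> E - B" using image_mono[OF T] img by (rule order_trans)
  then show "\<phi> ` wheel_triangle k i \<union> B \<subseteq> E" using BE by blast
  show "\<not> indep (\<phi> ` wheel_triangle k i \<union> B)" using tri_dep .
  fix s assume "s \<in> \<phi> ` wheel_triangle k i"
  then obtain t where t: "t \<in> wheel_triangle k i" "s = \<phi> t" by blast
  have "\<phi> ` (wheel_triangle k i - {t}) = \<phi> ` wheel_triangle k i - \<phi> ` {t}"
    by (rule inj_on_image_set_diff[OF inj]) (use T t in auto)
  then have "\<phi> ` wheel_triangle k i - {s} = \<phi> ` (wheel_triangle k i - {t})" using t(2) by simp
  then show "indep ((\<phi> ` wheel_triangle k i - {s}) \<union> B)" using tri_crit[OF t(1)] by simp
qed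

text \<open>A GF(2)-represented matroid cannot contain, relative to a set B, a copy of the whirl in
  which every triangle T is critically dependent (T \<union> B dependent, but not after deleting
  any element of T): the triangle sums lie in the span of B, hence so does their total, the
  rim sum, so the rim together with B is dependent.\<close>
lemma represented_no_whirl:
  assumes rep: "gf2_represents E indep v" and fin: "finite E" and k: "3 \<le> k"
    and inj: "inj_on \<phi> (wheel_edges k)" and img: "\<phi> ` wheel_edges k \<subseteq> E - B" and BE: "B \<subseteq> E"
    and tri_dep: "\<And>i. i < k \<Longrightarrow> \<not> indep (\<phi> ` wheel_triangle k i \<union> B)"
    and tri_crit: "\<And>i t. i < k \<Longrightarrow> t \<in> wheel_triangle k i \<Longrightarrow>
                          indep (\<phi> ` (wheel_triangle k i - {t}) \<union> B)"
  shows "\<not> indep (\<phi> ` wheel_rim k \<union> B)"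
proof
  let ?R = "\<phi> ` wheel_rim k"
  assume R_indep: "indep (?R \<union> B)"
  have finB: "finite B" using finite_subset[OF BE fin] .
  have in_span: "\<exists>A \<subseteq> B. sum v (\<phi> ` wheel_triangle k i) = sum v A" if "i \<in> {..<k}" for i
    using triangle_sum_in_span[OF rep fin inj img BE _ tri_dep tri_crit] that by simp
  have "\<exists>A \<subseteq> B. (\<Sum>i<k. sum v (\<phi> ` wheel_triangle k i)) = sum v A"
    by (rule sum_of_subset_sums[OF finite_lessThan finB in_span])
  then obtain A where A: "A \<subseteq> B" "(\<Sum>i<k. sum v (\<phi> ` wheel_triangle k i)) = sum v A"
    by blast
  have k2: "2 \<le> k" using k by simp
  have "sum v ?R = sum (v \<circ> \<phi>) (wheel_rim k)"
    by (rule sum.reindex[OF inj_on_subset[OF inj wheel_rim_subset]])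
  also have "\<dots> = (\<Sum>i<k. sum (v \<circ> \<phi>) (wheel_triangle k i))"
    by (rule rim_sum_eq_triangle_sums[OF k2])
  also have "\<dots> = (\<Sum>i<k. sum v (\<phi> ` wheel_triangle k i))"
  proof (rule sum.cong[OF refl])
    fix i assume "i \<in> {..<k}"
    then have "inj_on \<phi> (wheel_triangle k i)" using inj_on_subset[OF inj wheel_triangle_subset] by simp
    then show "sum (v \<circ> \<phi>) (wheel_triangle k i) = sum v (\<phi> ` wheel_triangle k i)"
      by (rule sum.reindex[symmetric])
  qed
  finally have sum_R: "sum v ?R = sum v A" using A(2) by simp
  have R_sub: "?R \<subseteq> E - B" using image_mono[OF wheel_rim_subset] img by (rule order_trans)
  then have RA: "?R \<inter> A = {}" and RB: "?R \<union> B \<subseteq> E" using A(1) BE by blast+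
  have finR: "finite ?R" using finite_subset[OF _ fin] RB by blast
  have finA: "finite A" using finite_subset[OF A(1) finB] .
  have "sum v (?R \<union> A) = sum v ?R + sum v A" by (rule sum.union_disjoint[OF finR finA RA])
  also have "\<dots> = 0" unfolding sum_R by (rule bitvec_add_self)
  finally have "sum v (?R \<union> A) = 0" .
  moreover have "?R \<noteq> {}" using card_wheel_rim[of k] k by auto
  ultimately show False using represented_indep_sum[OF rep RB R_indep, of "?R \<union> A"] A(1) by blast
qed

section \<open>Whirl minors of a relaxed binary matroid\<close>

lemma subset_Diff_iff: "A \<subseteq> E - C \<longleftrightarrow> A \<subseteq> E \<and> A \<inter> C = {}"
  by blast

locale whirl_minor = relaxation +
  fixes k :: nat and C E1 :: "'a set" and indep1 :: "'a set \<Rightarrow> bool"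
    and \<phi> :: "bool \<times> nat \<Rightarrow> 'a"
  assumes k: "3 \<le> k" and C: "C \<subseteq> E" and E1: "E1 \<subseteq> E - C"
    and indep1: "\<And>Y. indep1 Y \<longleftrightarrow> Y \<subseteq> E1 \<and> rank M (Y \<union> C) = card Y + rank M C"
    and iso: "iso_map \<phi> (wheel_edges k) (whirl_indep k) E1 indep1"
begin

abbreviation R :: "'a set" where "R \<equiv> \<phi> ` wheel_rim k"

lemma inj: "inj_on \<phi> (wheel_edges k)" and img: "\<phi> ` wheel_edges k = E1"
  and iso_indep: "\<And>Y. Y \<subseteq> wheel_edges k \<Longrightarrow> whirl_indep k Y \<longleftrightarrow> indep1 (\<phi> ` Y)"
  using iso unfolding iso_map_def bij_betw_def by auto

lemma card_phi: "Y \<subseteq> wheel_edges k \<Longrightarrow> card (\<phi> ` Y) = card Y"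
  using card_image[OF inj_on_subset[OF inj]] .

lemma in_E1: "Y \<subseteq> wheel_edges k \<Longrightarrow> \<phi> ` Y \<subseteq> E1"
  using image_mono[of Y "wheel_edges k" \<phi>] unfolding img .

lemma in_E: "Y \<subseteq> wheel_edges k \<Longrightarrow> \<phi> ` Y \<subseteq> E"
  and off_C: "Y \<subseteq> wheel_edges k \<Longrightarrow> \<phi> ` Y \<inter> C = {}"
  using subset_Diff_iff[THEN iffD1, OF order_trans[OF in_E1 E1]] by blast+

text \<open>The rim is independent in M1 and has k elements, so C has M-rank at most |X| - k.
  Hence C \<noteq> X, and no independent set of M1 with fewer than k elements spans X with C.\<close>
lemma rank_C: "rank M C + k \<le> card X"
proof -
  have "indep1 R" using iso_indep[OF wheel_rim_subset] whirl_indep_rim by blast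
  then have "rank M (R \<union> C) = k + rank M C"
    using indep1 card_phi[OF wheel_rim_subset] card_wheel_rim by simp
  then show ?thesis using rank_M_le[of "R \<union> C"] by linarith
qed

lemma C_neq_X: "C \<noteq> X"
proof
  assume "C = X"
  then show False using rank_C rank_M_X k by simp
qed

lemma small_not_X:
  assumes Y: "indep1 Y" "card Y < k"
  shows "Y \<union> C \<noteq> X"
proof
  assume "Y \<union> C = X"
  moreover have "rank M (Y \<union> C) = card Y + rank M C" using Y(1) indep1 by blast
  ultimately show False using rank_C rank_M_X Y(2) by simp
qed

lemma to_N:
  assumes B: "max_indep_subset N C B"
    and Y: "Y \<subseteq> wheel_edges k" "whirl_indep k Y" "\<phi> ` Y \<union> C \<noteq> X"
  shows "N (\<phi> ` Y \<union> B)"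
proof -
  have "indep1 (\<phi> ` Y)" using iso_indep[OF Y(1)] Y(2) by blast
  then have "rank M (\<phi> ` Y \<union> C) = card (\<phi> ` Y) + rank M C" using indep1 by blast
  then show ?thesis by (rule contract_M_imp_N[OF C C_neq_X B in_E[OF Y(1)] off_C[OF Y(1)] Y(3)])
qed

lemma from_N:
  assumes B: "max_indep_subset N C B" and Y: "Y \<subseteq> wheel_edges k" "\<not> whirl_indep k Y"
  shows "\<not> N (\<phi> ` Y \<union> B)"
proof
  assume "N (\<phi> ` Y \<union> B)"
  then have "rank M (\<phi> ` Y \<union> C) = card (\<phi> ` Y) + rank M C"
    by (rule contract_N_imp_M[OF C C_neq_X B in_E[OF Y(1)] off_C[OF Y(1)]])
  then have "indep1 (\<phi> ` Y)" using indep1 in_E1[OF Y(1)] by blast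
  then show False using iso_indep[OF Y(1)] Y(2) by blast
qed

lemma triangle_minus_to_N:
  assumes B: "max_indep_subset N C B" and i: "i < k" and t: "t \<in> wheel_triangle k i"
  shows "N (\<phi> ` (wheel_triangle k i - {t}) \<union> B)"
proof -
  let ?P = "wheel_triangle k i - {t}"
  have P: "?P \<subseteq> wheel_edges k" "whirl_indep k ?P"
    using wheel_triangle_subset[OF i] whirl_triangle_minus_indep[OF k i t] by blast+
  have "card (wheel_triangle k i) \<le> 3" unfolding wheel_triangle_def by (simp add: card_insert_if)
  then have "card (\<phi> ` ?P) < k" using card_phi[OF P(1)] t k by (simp add: wheel_triangle_def)
  moreover have "indep1 (\<phi> ` ?P)" using iso_indep[OF P(1)] P(2) by blast
  ultimately show ?thesis using to_N[OF B P] small_not_X by blast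
qed

text \<open>Main step: the rim of M1 together with C is exactly X.  Otherwise the whirl would sit,
  relative to B, inside the binary matroid N, contradicting represented_no_whirl.\<close>
lemma rim_union_C:
  assumes binary: "binary E N"
  shows "R \<union> C = X"
proof (rule ccontr)
  assume R_C: "R \<union> C \<noteq> X"
  obtain v where rep: "gf2_represents E N v" using binary_represented[OF binary] .
  have "N {}" using sys_N unfolding indep_system_def by blast
  then obtain B where B: "max_indep_subset N C B"
    using exists_max_indep_subset[of C N "{}"] finite_subset[OF C matroid_finite[OF mat]] by blast
  have BC: "B \<subseteq> C" using B unfolding max_indep_subset_def by blast
  have "\<not> N (R \<union> B)"
  proof (rule represented_no_whirl[OF rep matroid_finite[OF mat] k inj])
    have "\<phi> ` wheel_edges k \<inter> B = {}" using off_C[OF order_refl] BC by blast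
    then show "\<phi> ` wheel_edges k \<subseteq> E - B" using in_E[OF order_refl] by blast
    show "B \<subseteq> E" using BC C by blast
    show "\<not> N (\<phi> ` wheel_triangle k i \<union> B)" if "i < k" for i
      by (rule from_N[OF B wheel_triangle_subset[OF that] whirl_triangle_dep])
    show "N (\<phi> ` (wheel_triangle k i - {t}) \<union> B)" if "i < k" "t \<in> wheel_triangle k i" for i t
      by (rule triangle_minus_to_N[OF B that])
  qed
  moreover have "N (R \<union> B)" by (rule to_N[OF B wheel_rim_subset whirl_indep_rim R_C])
  ultimately show False by contradiction
qed

text \<open>Consequently the rim lies in X, while the spokes, which lie in E1 (disjoint from C) and
  are disjoint from the rim by injectivity, avoid X.\<close>
lemma rim_in_X_spokes_off_X:
  assumes "binary E N"
  shows "R \<subseteq> X \<and> \<phi> ` wheel_spokes k \<inter> X = {}"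
proof -
  have "\<phi> ` wheel_spokes k \<inter> R = {}"
    using inj_on_image_Int[OF inj wheel_spokes_subset wheel_rim_subset]
    unfolding wheel_spokes_def wheel_rim_def by auto
  moreover have "\<phi> ` wheel_spokes k \<inter> C = {}" using off_C[OF wheel_spokes_subset] .
  ultimately show ?thesis using rim_union_C[OF assms] by blast
qed

end

theorem lemma3p4:
  fixes E :: "'a set" and indepN :: "'a set \<Rightarrow> bool" and X :: "'a set" and k :: nat
    and E1 :: "'a set" and indep1 :: "'a set \<Rightarrow> bool"
  assumes "binary E indepN"
    and "circuit_hyperplane E indepN X"
    and "k \<ge> 3"
    and "\<exists>E' indep' (f :: bool \<times> nat \<Rightarrow> 'a).
           minor E (relax E indepN X) E' indep' \<and>
           iso_map f (wheel_edges k) (whirl_indep k) E' indep'"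
    and "minor E (relax E indepN X) E1 indep1"
    and "iso_map \<phi> (wheel_edges k) (whirl_indep k) E1 indep1"
  shows "\<phi> ` wheel_rim k \<subseteq> X \<and> \<phi> ` wheel_spokes k \<inter> X = {}"
proof -
  have N: "matroid E indepN" using assms(1) unfolding binary_def by blast
  obtain C D where C: "C \<subseteq> E" and E1: "E1 = E - C - D"
    and indep1: "\<And>Y. indep1 Y \<longleftrightarrow> Y \<subseteq> E1 \<and> rank (relax E indepN X) (Y \<union> C) =
                                             card Y + rank (relax E indepN X) C"
    using assms(5) unfolding minor_def by blast
  interpret whirl_minor E indepN X k C E1 indep1 \<phi>
    using N assms(2,3,6) C E1 indep1 by unfold_locales auto
  show ?thesis using rim_in_X_spokes_off_X[OF assms(1)] .
qed

end
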